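(* Let $G$ be a locally generalized radical group and let $A$ be a minimax-antifinitary $\mathbb{Z}G$-module. Suppose that $G \neq \mathbf{Coc}_{\mathbb{Z}\text{-mmx}}(G)$, $G$ is not finitely generated, and $G/\mathbf{Coc}_{\mathbb{Z}\text{-mmx}}(G)$ is finitely generated. Let $g \in G$ be such that $G = \langle g\rangle \mathbf{Coc}_{\mathbb{Z}\text{-mmx}}(G)$. If $H$ is a normal subgroup of $G$ of finite index, then $H\langle g\rangle = G$, and $G/H$ is a $p$-group, where $p = |G/\mathbf{Coc}_{\mathbb{Z}\text{-mmx}}(G)|$ (which is a prime).
   Context: An $R$-module is minimax if it has a finite series of submodules whose factors are each noetherian or artinian. For a subgroup $H$ of $G$, $C_A(H)$ is the set of elements of $A$ fixed by all of $H$. $\mathbf{Coc}_{\mathbb{Z}\text{-mmx}}(G) = \{x \in G \mid A/C_A(x) \text{ is a minimax } \mathbb{Z}\text{-module}\}$. A $\mathbb{Z}G$-module $A$ is minimax-antifinitary if $A/C_A(H)$ is a minimax $\mathbb{Z}$-module for every proper subgroup $H$ of $G$ that is not finitely generated, while $A/C_A(G)$ is not a minimax $\mathbb{Z}$-module. A group is generalized radical if it has an ascending series whose factors are locally nilpotent or locally finite; it is locally generalized radical if each finitely generated subgroup is generalized radical. *)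

theory Defs
  imports "HOL-Algebra.Algebra"
begin

definition fin_gen_subgroup :: "('a, 'b) monoid_scheme \<Rightarrow> 'a set \<Rightarrow> bool" where
  "fin_gen_subgroup G H \<longleftrightarrow> subgroup H G \<and> (\<exists>S. finite S \<and> S \<subseteq> H \<and> generate G S = H)"

definition fin_gen_group :: "('a, 'b) monoid_scheme \<Rightarrow> bool" where
  "fin_gen_group G \<longleftrightarrow> (\<exists>S. finite S \<and> S \<subseteq> carrier G \<and> generate G S = carrier G)"

definition locally_finite_group :: "('a, 'b) monoid_scheme \<Rightarrow> bool" where
  "locally_finite_group K \<longleftrightarrow>
     (\<forall>S. finite S \<and> S \<subseteq> carrier K \<longrightarrow> finite (generate K S))"

text \<open>Lower central series: gamma_1 = K (index 0 here), gamma_{i+1} = [gamma_i, K].\<close>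
fun lower_central :: "('a, 'b) monoid_scheme \<Rightarrow> nat \<Rightarrow> 'a set" where
  "lower_central K 0 = carrier K"
| "lower_central K (Suc n) =
     generate K {x \<otimes>\<^bsub>K\<^esub> y \<otimes>\<^bsub>K\<^esub> inv\<^bsub>K\<^esub> x \<otimes>\<^bsub>K\<^esub> inv\<^bsub>K\<^esub> y | x y. x \<in> lower_central K n \<and> y \<in> carrier K}"

definition nilpotent_group :: "('a, 'b) monoid_scheme \<Rightarrow> bool" where
  "nilpotent_group K \<longleftrightarrow> (\<exists>n. lower_central K n = {\<one>\<^bsub>K\<^esub>})"

definition locally_nilpotent_group :: "('a, 'b) monoid_scheme \<Rightarrow> bool" where
  "locally_nilpotent_group K \<longleftrightarrow>
     (\<forall>S. finite S \<and> S \<subseteq> carrier K \<longrightarrow> nilpotent_group (K\<lparr>carrier := generate K S\<rparr>))"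

text \<open>An ascending series of K is rendered as the set of its terms: a set of subgroups
  containing 1 and K, well-ordered by inclusion, closed under unions of nonempty subfamilies
  (continuity at limit ordinals), such that every term H other than K is normal in its
  successor term H' (the least term properly containing H).\<close>
definition generalized_radical :: "('a, 'b) monoid_scheme \<Rightarrow> bool" where
  "generalized_radical K \<longleftrightarrow>
     (\<exists>\<S>. (\<forall>H\<in>\<S>. subgroup H K) \<and> {\<one>\<^bsub>K\<^esub>} \<in> \<S> \<and> carrier K \<in> \<S>
        \<and> (\<forall>T. T \<subseteq> \<S> \<and> T \<noteq> {} \<longrightarrow> (\<exists>H\<in>T. \<forall>H'\<in>T. H \<subseteq> H'))
        \<and> (\<forall>T. T \<subseteq> \<S> \<and> T \<noteq> {} \<longrightarrow> \<Union>T \<in> \<S>)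
        \<and> (\<forall>H\<in>\<S>. H \<noteq> carrier K \<longrightarrow>
              (\<exists>H'\<in>\<S>. H \<subset> H' \<and> (\<forall>H''\<in>\<S>. H \<subset> H'' \<longrightarrow> H' \<subseteq> H'')
                 \<and> H \<lhd> (K\<lparr>carrier := H'\<rparr>)
                 \<and> (locally_nilpotent_group ((K\<lparr>carrier := H'\<rparr>) Mod H)
                    \<or> locally_finite_group ((K\<lparr>carrier := H'\<rparr>) Mod H)))))"

definition locally_generalized_radical :: "('a, 'b) monoid_scheme \<Rightarrow> bool" where
  "locally_generalized_radical G \<longleftrightarrow>
     (\<forall>S. finite S \<and> S \<subseteq> carrier G \<longrightarrow> generalized_radical (G\<lparr>carrier := generate G S\<rparr>))"

definition noetherian_group :: "('a, 'b) monoid_scheme \<Rightarrow> bool" where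
  "noetherian_group M \<longleftrightarrow>
     (\<forall>f :: nat \<Rightarrow> 'a set. (\<forall>n. subgroup (f n) M) \<and> (\<forall>n. f n \<subseteq> f (Suc n))
        \<longrightarrow> (\<exists>N. \<forall>m\<ge>N. f m = f N))"

definition artinian_group :: "('a, 'b) monoid_scheme \<Rightarrow> bool" where
  "artinian_group M \<longleftrightarrow>
     (\<forall>f :: nat \<Rightarrow> 'a set. (\<forall>n. subgroup (f n) M) \<and> (\<forall>n. f (Suc n) \<subseteq> f n)
        \<longrightarrow> (\<exists>N. \<forall>m\<ge>N. f m = f N))"

text \<open>For an abelian group M (a Z-module), Z-submodules are exactly subgroups.\<close>
definition minimax :: "('a, 'b) monoid_scheme \<Rightarrow> bool" where
  "minimax M \<longleftrightarrow>
     (\<exists>(n::nat) (S :: nat \<Rightarrow> 'a set).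
        S 0 = {\<one>\<^bsub>M\<^esub>} \<and> S n = carrier M \<and> (\<forall>i\<le>n. subgroup (S i) M)
        \<and> (\<forall>i<n. S i \<subseteq> S (Suc i)
              \<and> (noetherian_group ((M\<lparr>carrier := S (Suc i)\<rparr>) Mod S i)
                 \<or> artinian_group ((M\<lparr>carrier := S (Suc i)\<rparr>) Mod S i))))"

text \<open>A ZG-module: an abelian group A (written multiplicatively, HOL-Algebra style)
  with a left action of G by group endomorphisms.\<close>
definition ZG_module ::
  "('g, 'c) monoid_scheme \<Rightarrow> ('a, 'd) monoid_scheme \<Rightarrow> ('g \<Rightarrow> 'a \<Rightarrow> 'a) \<Rightarrow> bool" where
  "ZG_module G A act \<longleftrightarrow> group G \<and> comm_group A
     \<and> (\<forall>g\<in>carrier G. \<forall>a\<in>carrier A. act g a \<in> carrier A)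
     \<and> (\<forall>g\<in>carrier G. \<forall>a\<in>carrier A. \<forall>b\<in>carrier A.
           act g (a \<otimes>\<^bsub>A\<^esub> b) = act g a \<otimes>\<^bsub>A\<^esub> act g b)
     \<and> (\<forall>a\<in>carrier A. act \<one>\<^bsub>G\<^esub> a = a)
     \<and> (\<forall>g\<in>carrier G. \<forall>h\<in>carrier G. \<forall>a\<in>carrier A.
           act (g \<otimes>\<^bsub>G\<^esub> h) a = act g (act h a))"

definition centralizer_in_module ::
  "('a, 'd) monoid_scheme \<Rightarrow> ('g \<Rightarrow> 'a \<Rightarrow> 'a) \<Rightarrow> 'g set \<Rightarrow> 'a set" where
  "centralizer_in_module A act H = {a \<in> carrier A. \<forall>h\<in>H. act h a = a}"

definition Coc_mmx ::
  "('g, 'c) monoid_scheme \<Rightarrow> ('a, 'd) monoid_scheme \<Rightarrow> ('g \<Rightarrow> 'a \<Rightarrow> 'a) \<Rightarrow> 'g set" where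
  "Coc_mmx G A act =
     {x \<in> carrier G. minimax (A Mod centralizer_in_module A act {x})}"

definition minimax_antifinitary ::
  "('g, 'c) monoid_scheme \<Rightarrow> ('a, 'd) monoid_scheme \<Rightarrow> ('g \<Rightarrow> 'a \<Rightarrow> 'a) \<Rightarrow> bool" where
  "minimax_antifinitary G A act \<longleftrightarrow> ZG_module G A act
     \<and> (\<forall>H. subgroup H G \<and> H \<noteq> carrier G \<and> \<not> fin_gen_subgroup G H
            \<longrightarrow> minimax (A Mod centralizer_in_module A act H))
     \<and> \<not> minimax (A Mod centralizer_in_module A act (carrier G))"

end

theory Submission
  imports Defs
begin

text \<open>
  Write \<open>C\<close> for \<open>Coc_mmx G A act\<close>. Minimax abelian groups are closed under quotients and under
  subdirect products of two of them, and conjugation by \<open>h\<close> carries \<open>C\<^sub>A(x)\<close> onto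
  \<open>C\<^sub>A(h x h\<inverse>)\<close>; hence \<open>C\<close> is a normal subgroup. A subgroup \<open>K\<close> of finite index in the
  non-finitely generated group \<open>G\<close> is not finitely generated, so if \<open>K\<close> is proper then
  \<open>A/C\<^sub>A(K)\<close> is minimax, and since \<open>C\<^sub>A(K) \<subseteq> C\<^sub>A(x)\<close> for \<open>x \<in> K\<close> we get \<open>K \<subseteq> C\<close>.

  Now \<open>G = C\<langle>g\<rangle>\<close>, so for a normal subgroup \<open>N\<close> with \<open>G = N\<langle>g\<rangle>\<close> and a prime \<open>q\<close> the subgroup
  \<open>N\<langle>g\<^sup>q\<rangle>\<close> has index at most \<open>q\<close>; if \<open>q\<close> divides the order of \<open>gN\<close> it is proper, hence
  contained in \<open>C\<close>, so \<open>g\<^sup>q \<in> C\<close>. For \<open>N = C\<close> this makes \<open>|G : C|\<close> a prime \<open>p\<close>. A normal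
  subgroup \<open>H\<close> of finite index satisfies \<open>H\<langle>g\<rangle> = G\<close>, since otherwise \<open>H\<langle>g\<rangle> \<subseteq> C\<close> would
  contain \<open>g \<notin> C\<close>; so \<open>G/H\<close> is cyclic generated by \<open>gH\<close>, and with \<open>N = H\<close> every prime
  dividing its order is \<open>p\<close>.
\<close>

lemma (in group_hom) subgroup_vimage:
  assumes "subgroup K H"
  shows "subgroup {x \<in> carrier G. h x \<in> K} G"
  using assms by (intro G.subgroupI) (auto simp: subgroup.one_closed subgroup.m_inv_closed subgroup.m_closed)

lemma (in comm_group) subgroup_is_comm_group:
  assumes "subgroup H G"
  shows "comm_group (G\<lparr>carrier := H\<rparr>)"
  by (rule group.group_comm_groupI[OF subgroup.subgroup_is_group[OF assms is_group]])
    (use assms in \<open>simp add: m_comm subgroup.mem_carrier\<close>)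

lemma (in group) set_mult_Int_subgroup:
  assumes "subgroup K G" and "I \<subseteq> K" and "J \<subseteq> carrier G"
  shows "(I <#> J) \<inter> K = I <#> (J \<inter> K)"
proof
  show "(I <#> J) \<inter> K \<subseteq> I <#> (J \<inter> K)"
  proof
    fix z assume "z \<in> (I <#> J) \<inter> K"
    then obtain x y where xy: "x \<in> I" "y \<in> J" "z = x \<otimes> y" "z \<in> K"
      unfolding set_mult_def by blast
    have "x \<in> K" "y \<in> carrier G"
      using xy assms(2,3) by auto
    then have "y = inv x \<otimes> z"
      using xy subgroup.mem_carrier[OF assms(1)] by (simp add: inv_solve_left)
    also have "\<dots> \<in> K"
      using \<open>x \<in> K\<close> xy(4) assms(1) by (simp add: subgroup.m_closed subgroup.m_inv_closed)
    finally show "z \<in> I <#> (J \<inter> K)"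
      using xy unfolding set_mult_def by blast
  qed
  show "I <#> (J \<inter> K) \<subseteq> (I <#> J) \<inter> K"
    using assms(1,2) unfolding set_mult_def by (auto simp: subgroup.m_closed)
qed

lemma (in monoid) subset_set_mult_one:
  assumes "K \<subseteq> carrier G" and "\<one> \<in> S"
  shows "K \<subseteq> K <#> S" and "K \<subseteq> S <#> K"
  using assms unfolding set_mult_def by (force intro: r_one[symmetric] l_one[symmetric])+

lemma (in group) subgroup_set_mult_absorb:
  assumes "subgroup H G" and "S \<subseteq> H" and "\<one> \<in> S"
  shows "H <#> S = H" and "S <#> H = H"
proof -
  have "H <#> S \<subseteq> H" "S <#> H \<subseteq> H"
    using mono_set_mult[where G = G and H = H and H' = H, OF subset_refl assms(2)]
      mono_set_mult[where G = G and K = H and K' = H, OF assms(2) subset_refl]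
      subgroup_mult_id[OF assms(1)] by auto
  moreover have "H \<subseteq> H <#> S" "H \<subseteq> S <#> H"
    using subset_set_mult_one[OF subgroup.subset[OF assms(1)] assms(3)] .
  ultimately show "H <#> S = H" "S <#> H = H"
    by auto
qed

section \<open>Chain conditions on intervals of the subgroup lattice\<close>

definition chain_stable ::
  "('a, 'b) monoid_scheme \<Rightarrow> ('a set \<Rightarrow> 'a set \<Rightarrow> bool) \<Rightarrow> 'a set \<Rightarrow> 'a set \<Rightarrow> bool" where
  "chain_stable M R L U \<longleftrightarrow>
     (\<forall>f :: nat \<Rightarrow> 'a set.
        (\<forall>n. subgroup (f n) M \<and> L \<subseteq> f n \<and> f n \<subseteq> U \<and> R (f n) (f (Suc n)))
        \<longrightarrow> (\<exists>N. \<forall>m\<ge>N. f m = f N))"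

text \<open>
  The factor \<open>U/L\<close> of a section \<open>L \<subseteq> U\<close> is noetherian or artinian, expressed through the
  subgroups between \<open>L\<close> and \<open>U\<close> so that no quotient has to be formed
  (cf. \<open>noetherian_or_artinian_factor_iff\<close>).
\<close>
definition minimax_interval :: "('a, 'b) monoid_scheme \<Rightarrow> 'a set \<Rightarrow> 'a set \<Rightarrow> bool" where
  "minimax_interval M L U \<longleftrightarrow> chain_stable M (\<subseteq>) L U \<or> chain_stable M (\<supseteq>) L U"

lemma noetherian_group_iff_chain_stable:
  "noetherian_group M \<longleftrightarrow> chain_stable M (\<subseteq>) {\<one>\<^bsub>M\<^esub>} (carrier M)"
  unfolding noetherian_group_def chain_stable_def
  by (auto simp: subgroup.one_closed subgroup.subset)

lemma artinian_group_iff_chain_stable: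
  "artinian_group M \<longleftrightarrow> chain_stable M (\<supseteq>) {\<one>\<^bsub>M\<^esub>} (carrier M)"
  unfolding artinian_group_def chain_stable_def
  by (auto simp: subgroup.one_closed subgroup.subset)

lemma chain_stable_transfer:
  assumes embed: "\<And>W. subgroup W M' \<Longrightarrow> L' \<subseteq> W \<Longrightarrow> W \<subseteq> U' \<Longrightarrow>
      subgroup (e W) M \<and> L \<subseteq> e W \<and> e W \<subseteq> U \<and> r (e W) = W"
    and preserve: "\<And>W1 W2. R' W1 W2 \<Longrightarrow> R (e W1) (e W2)"
    and stable: "chain_stable M R L U"
  shows "chain_stable M' R' L' U'"
  unfolding chain_stable_def
proof (intro allI impI)
  fix f :: "nat \<Rightarrow> _"
  assume f: "\<forall>n. subgroup (f n) M' \<and> L' \<subseteq> f n \<and> f n \<subseteq> U' \<and> R' (f n) (f (Suc n))"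
  then have "\<forall>n. subgroup (e (f n)) M \<and> L \<subseteq> e (f n) \<and> e (f n) \<subseteq> U \<and> R (e (f n)) (e (f (Suc n)))"
    using embed preserve by blast
  then obtain N where N: "\<forall>m\<ge>N. e (f m) = e (f N)"
    using stable[unfolded chain_stable_def, rule_format, of "\<lambda>n. e (f n)"] by blast
  have "r (e (f n)) = f n" for n
    using embed f by blast
  with N show "\<exists>N. \<forall>m\<ge>N. f m = f N"
    by metis
qed

lemma minimax_interval_transfer:
  assumes embed: "\<And>W. subgroup W M' \<Longrightarrow> L' \<subseteq> W \<Longrightarrow> W \<subseteq> U' \<Longrightarrow>
      subgroup (e W) M \<and> L \<subseteq> e W \<and> e W \<subseteq> U \<and> r (e W) = W"
    and "mono e" and "minimax_interval M L U"
  shows "minimax_interval M' L' U'"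
proof -
  have "chain_stable M' (\<subseteq>) L' U'" if "chain_stable M (\<subseteq>) L U"
    by (rule chain_stable_transfer[OF _ _ that], fact embed, erule monoD[OF \<open>mono e\<close>])
  moreover have "chain_stable M' (\<supseteq>) L' U'" if "chain_stable M (\<supseteq>) L U"
    by (rule chain_stable_transfer[OF _ _ that], fact embed, erule monoD[OF \<open>mono e\<close>])
  ultimately show ?thesis
    using \<open>minimax_interval M L U\<close> unfolding minimax_interval_def by blast
qed

lemma (in group) minimax_interval_restrict:
  assumes "subgroup V G" and "U \<subseteq> V"
  shows "minimax_interval (G\<lparr>carrier := V\<rparr>) L U \<longleftrightarrow> minimax_interval G L U"
proof -
  have "subgroup W (G\<lparr>carrier := V\<rparr>) \<longleftrightarrow> subgroup W G" if "W \<subseteq> U" for W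
    using subgroup_incl incl_subgroup assms that by blast
  then have "chain_stable (G\<lparr>carrier := V\<rparr>) R L U \<longleftrightarrow> chain_stable G R L U" for R
    unfolding chain_stable_def by (metis (no_types, lifting))
  then show ?thesis
    unfolding minimax_interval_def by simp
qed

context normal
begin

lemma Union_FactGroup_eq:
  assumes "\<W> \<subseteq> carrier (G Mod H)"
  shows "\<Union>\<W> = {a \<in> carrier G. H #> a \<in> \<W>}"
proof
  show "\<Union>\<W> \<subseteq> {a \<in> carrier G. H #> a \<in> \<W>}"
  proof
    fix a assume "a \<in> \<Union>\<W>"
    then obtain x where x: "H #> x \<in> \<W>" "a \<in> H #> x" "x \<in> carrier G"
      using assms by (auto simp: FactGroup_def RCOSETS_def)
    then have "a \<in> carrier G"
      using r_coset_subset_G[OF subset] by blast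
    with x show "a \<in> {a \<in> carrier G. H #> a \<in> \<W>}"
      using repr_independence[OF _ _ subgroup_axioms] by auto
  qed
qed (use rcos_self[OF _ subgroup_axioms] in blast)

lemma group_hom_FactGroup: "group_hom G (G Mod H) (\<lambda>a. H #> a)"
  by (simp add: group_hom_def group_hom_axioms_def is_group factorgroup_is_group r_coset_hom_Mod)

lemma subgroup_Union_FactGroup:
  assumes "subgroup \<W> (G Mod H)"
  shows "subgroup (\<Union>\<W>) G" and "H \<subseteq> \<Union>\<W>" and "(\<lambda>a. H #> a) ` \<Union>\<W> = \<W>"
proof -
  have eq: "\<Union>\<W> = {a \<in> carrier G. H #> a \<in> \<W>}"
    using Union_FactGroup_eq subgroup.subset[OF assms] .
  show "subgroup (\<Union>\<W>) G"
    unfolding eq by (rule group_hom.subgroup_vimage[OF group_hom_FactGroup assms])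
  show "H \<subseteq> \<Union>\<W>"
    using subgroup.one_closed[OF assms] by auto
  show "(\<lambda>a. H #> a) ` \<Union>\<W> = \<W>"
    using subgroup.subset[OF assms] unfolding eq by (auto simp: FactGroup_def RCOSETS_def)
qed

lemma subgroup_image_FactGroup:
  assumes "subgroup W G" and "H \<subseteq> W"
  shows "subgroup ((\<lambda>a. H #> a) ` W) (G Mod H)" and "\<Union>((\<lambda>a. H #> a) ` W) = W"
proof -
  show "subgroup ((\<lambda>a. H #> a) ` W) (G Mod H)"
    using group_hom.subgroup_img_is_subgroup[OF group_hom_FactGroup assms(1)] .
  have "H #> w \<subseteq> W" if "w \<in> W" for w
    using assms that by (auto simp: r_coset_def subgroup.m_closed)
  moreover have "w \<in> H #> w" if "w \<in> W" for w
    using rcos_self[OF _ subgroup_axioms] subgroup.mem_carrier[OF assms(1) that] .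
  ultimately show "\<Union>((\<lambda>a. H #> a) ` W) = W"
    by blast
qed

lemma minimax_interval_FactGroup_iff:
  assumes "subgroup \<S>\<^sub>1 (G Mod H)" and "subgroup \<S>\<^sub>2 (G Mod H)" and "\<S>\<^sub>1 \<subseteq> \<S>\<^sub>2"
  shows "minimax_interval (G Mod H) \<S>\<^sub>1 \<S>\<^sub>2 \<longleftrightarrow> minimax_interval G (\<Union>\<S>\<^sub>1) (\<Union>\<S>\<^sub>2)"
proof
  assume "minimax_interval (G Mod H) \<S>\<^sub>1 \<S>\<^sub>2"
  then show "minimax_interval G (\<Union>\<S>\<^sub>1) (\<Union>\<S>\<^sub>2)"
  proof (rule minimax_interval_transfer[where e = "image (\<lambda>a. H #> a)" and r = Union, rotated 2])
    fix W assume W: "subgroup W G" "\<Union>\<S>\<^sub>1 \<subseteq> W" "W \<subseteq> \<Union>\<S>\<^sub>2"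
    then have "H \<subseteq> W"
      using subgroup_Union_FactGroup(2)[OF assms(1)] by blast
    then show "subgroup ((\<lambda>a. H #> a) ` W) (G Mod H) \<and> \<S>\<^sub>1 \<subseteq> (\<lambda>a. H #> a) ` W
        \<and> (\<lambda>a. H #> a) ` W \<subseteq> \<S>\<^sub>2 \<and> \<Union>((\<lambda>a. H #> a) ` W) = W"
      using subgroup_image_FactGroup[OF W(1)] W(2,3)
        subgroup_Union_FactGroup(3)[OF assms(1)] subgroup_Union_FactGroup(3)[OF assms(2)]
      by (metis image_mono)
  qed (auto intro: monoI)
next
  assume "minimax_interval G (\<Union>\<S>\<^sub>1) (\<Union>\<S>\<^sub>2)"
  then show "minimax_interval (G Mod H) \<S>\<^sub>1 \<S>\<^sub>2"
  proof (rule minimax_interval_transfer[where e = Union and r = "image (\<lambda>a. H #> a)", rotated 2])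
    fix \<W> assume "subgroup \<W> (G Mod H)" "\<S>\<^sub>1 \<subseteq> \<W>" "\<W> \<subseteq> \<S>\<^sub>2"
    then show "subgroup (\<Union>\<W>) G \<and> \<Union>\<S>\<^sub>1 \<subseteq> \<Union>\<W> \<and> \<Union>\<W> \<subseteq> \<Union>\<S>\<^sub>2
        \<and> (\<lambda>a. H #> a) ` \<Union>\<W> = \<W>"
      using subgroup_Union_FactGroup by blast
  qed (auto intro: monoI)
qed

end

lemma (in group) noetherian_or_artinian_factor_iff:
  assumes U: "subgroup U G" and L: "L \<lhd> G\<lparr>carrier := U\<rparr>"
  shows "noetherian_group (G\<lparr>carrier := U\<rparr> Mod L) \<or> artinian_group (G\<lparr>carrier := U\<rparr> Mod L)
      \<longleftrightarrow> minimax_interval G L U"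
proof -
  let ?Z = "G\<lparr>carrier := U\<rparr>"
  interpret L: normal L ?Z by fact
  interpret Q: group "?Z Mod L" by (rule L.factorgroup_is_group)
  have "\<Union>(carrier (?Z Mod L)) = U"
    using L.rcosets_part_G[OF L.subgroup_axioms] by (simp add: FactGroup_def)
  then have "minimax_interval (?Z Mod L) {L} (carrier (?Z Mod L)) \<longleftrightarrow> minimax_interval ?Z L U"
    using L.minimax_interval_FactGroup_iff[OF Q.triv_subgroup Q.subgroup_self] Q.one_closed
    by simp
  also have "\<dots> \<longleftrightarrow> minimax_interval G L U"
    by (rule minimax_interval_restrict[OF U subset_refl])
  finally show ?thesis
    unfolding minimax_interval_def noetherian_group_iff_chain_stable artinian_group_iff_chain_stable
    by simp
qed

section \<open>Minimax abelian groups\<close>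

text \<open>The series of \<open>A/B\<close> required by \<open>minimax\<close>, pulled back to \<open>A\<close>.\<close>
definition minimax_series :: "('a, 'b) monoid_scheme \<Rightarrow> 'a set \<Rightarrow> 'a set \<Rightarrow> bool" where
  "minimax_series M B C \<longleftrightarrow> (\<exists>(n::nat) (T :: nat \<Rightarrow> 'a set).
     T 0 = B \<and> T n = C \<and> (\<forall>i\<le>n. subgroup (T i) M)
     \<and> (\<forall>i<n. T i \<subseteq> T (Suc i) \<and> minimax_interval M (T i) (T (Suc i))))"

lemma (in comm_group) FactGroup_factor_iff_minimax_interval:
  assumes B: "subgroup B G"
    and S: "subgroup S (G Mod B)" and S': "subgroup S' (G Mod B)" and "S \<subseteq> S'"
  shows "noetherian_group ((G Mod B)\<lparr>carrier := S'\<rparr> Mod S) \<or> artinian_group ((G Mod B)\<lparr>carrier := S'\<rparr> Mod S)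
      \<longleftrightarrow> minimax_interval G (\<Union>S) (\<Union>S')"
proof -
  interpret B: normal B G by (rule subgroup_imp_normal[OF B])
  interpret M: comm_group "G Mod B" by (rule abelian_FactGroup[OF B])
  have "S \<lhd> (G Mod B)\<lparr>carrier := S'\<rparr>"
    using comm_group.subgroup_imp_normal[OF M.subgroup_is_comm_group[OF S']]
      M.subgroup_incl[OF S S' \<open>S \<subseteq> S'\<close>] by blast
  then show ?thesis
    using M.noetherian_or_artinian_factor_iff[OF S']
      B.minimax_interval_FactGroup_iff[OF S S' \<open>S \<subseteq> S'\<close>] by simp
qed

lemma (in comm_group) minimax_series_if_minimax_Mod:
  assumes B: "subgroup B G" and "minimax (G Mod B)"
  shows "minimax_series G B (carrier G)"
proof -
  interpret B: normal B G by (rule subgroup_imp_normal[OF B])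
  let ?M = "G Mod B"
  obtain n S where S: "S 0 = {B}" "S n = carrier ?M" "\<forall>i\<le>n. subgroup (S i) ?M"
      "\<forall>i<n. S i \<subseteq> S (Suc i) \<and> (noetherian_group (?M\<lparr>carrier := S (Suc i)\<rparr> Mod S i)
         \<or> artinian_group (?M\<lparr>carrier := S (Suc i)\<rparr> Mod S i))"
    using \<open>minimax ?M\<close> unfolding minimax_def by (auto simp only: one_FactGroup)
  have "\<Union>(S 0) = B" "\<Union>(S n) = carrier G"
    using S(1,2) rcosets_part_G[OF B] by (auto simp: FactGroup_def)
  moreover have "\<forall>i\<le>n. subgroup (\<Union>(S i)) G"
    using S(3) B.subgroup_Union_FactGroup(1) by simp
  moreover have "\<forall>i<n. \<Union>(S i) \<subseteq> \<Union>(S (Suc i)) \<and> minimax_interval G (\<Union>(S i)) (\<Union>(S (Suc i)))"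
  proof (intro allI impI)
    fix i assume "i < n"
    then show "\<Union>(S i) \<subseteq> \<Union>(S (Suc i)) \<and> minimax_interval G (\<Union>(S i)) (\<Union>(S (Suc i)))"
      using S(3,4) FactGroup_factor_iff_minimax_interval[OF B, of "S i" "S (Suc i)"]
      by (simp add: Sup_subset_mono)
  qed
  ultimately show ?thesis
    unfolding minimax_series_def by (intro exI[of _ n] exI[of _ "\<lambda>i. \<Union>(S i)"]) simp
qed

lemma (in comm_group) minimax_Mod_if_minimax_series:
  assumes B: "subgroup B G" and "minimax_series G B (carrier G)"
  shows "minimax (G Mod B)"
proof -
  interpret B: normal B G by (rule subgroup_imp_normal[OF B])
  let ?M = "G Mod B"
  obtain n T where T: "T 0 = B" "T n = carrier G" "\<forall>i\<le>n. subgroup (T i) G"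
      "\<forall>i<n. T i \<subseteq> T (Suc i) \<and> minimax_interval G (T i) (T (Suc i))"
    using assms(2) unfolding minimax_series_def by blast
  have B_T: "B \<subseteq> T i" if "i \<le> n" for i
    using that by (induction i) (use T(1,4) in \<open>auto simp: Suc_le_eq\<close>)
  define S where "S i = (\<lambda>a. B #> a) ` T i" for i
  have S: "subgroup (S i) ?M \<and> \<Union>(S i) = T i" if "i \<le> n" for i
    using B.subgroup_image_FactGroup T(3) B_T that unfolding S_def by blast
  have "S 0 = {B}"
    using coset_join2[OF _ B] subgroup.one_closed[OF B] subgroup.mem_carrier[OF B]
    unfolding S_def T(1) by (auto intro!: image_eqI[where x = \<one>])
  moreover have "S n = carrier ?M"
    unfolding S_def T(2) carrier_FactGroup ..
  moreover have "\<forall>i<n. S i \<subseteq> S (Suc i) \<and> (noetherian_group (?M\<lparr>carrier := S (Suc i)\<rparr> Mod S i)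
         \<or> artinian_group (?M\<lparr>carrier := S (Suc i)\<rparr> Mod S i))"
  proof (intro allI impI)
    fix i assume i: "i < n"
    then have "S i \<subseteq> S (Suc i)"
      using T(4) unfolding S_def by (simp add: image_mono)
    then show "S i \<subseteq> S (Suc i) \<and> (noetherian_group (?M\<lparr>carrier := S (Suc i)\<rparr> Mod S i)
         \<or> artinian_group (?M\<lparr>carrier := S (Suc i)\<rparr> Mod S i))"
      using FactGroup_factor_iff_minimax_interval[OF B, of "S i" "S (Suc i)"] S[of i] S[of "Suc i"] T(4) i
      by simp
  qed
  moreover have "\<forall>i\<le>n. subgroup (S i) ?M"
    using S by blast
  ultimately show ?thesis
    unfolding minimax_def by (intro exI[of _ n] exI[of _ S]) simp
qed

lemma (in comm_group) minimax_Mod_iff_minimax_series: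
  assumes "subgroup B G"
  shows "minimax (G Mod B) \<longleftrightarrow> minimax_series G B (carrier G)"
  using minimax_series_if_minimax_Mod minimax_Mod_if_minimax_series assms by blast

lemma minimax_series_trans:
  assumes "minimax_series M B C" and "minimax_series M C D"
  shows "minimax_series M B D"
proof -
  obtain n T where T: "T 0 = B" "T n = C" "\<forall>i\<le>n. subgroup (T i) M"
      "\<forall>i<n. T i \<subseteq> T (Suc i) \<and> minimax_interval M (T i) (T (Suc i))"
    using assms(1) unfolding minimax_series_def by blast
  obtain m T' where T': "T' 0 = C" "T' m = D" "\<forall>i\<le>m. subgroup (T' i) M"
      "\<forall>i<m. T' i \<subseteq> T' (Suc i) \<and> minimax_interval M (T' i) (T' (Suc i))"
    using assms(2) unfolding minimax_series_def by blast
  define T'' where "T'' i = (if i \<le> n then T i else T' (i - n))" for i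
  have shift: "T'' (n + j) = T' j" for j
    using T(2) T'(1) unfolding T''_def by (cases j) auto
  have low: "T'' i = T i" if "i \<le> n" for i
    using that unfolding T''_def by simp
  have "\<forall>i\<le>n + m. subgroup (T'' i) M"
  proof (intro allI impI)
    fix i assume "i \<le> n + m"
    then show "subgroup (T'' i) M"
      using T(3) T'(3) low shift[of "i - n"] by (cases "i \<le> n") auto
  qed
  moreover have "\<forall>i<n + m. T'' i \<subseteq> T'' (Suc i) \<and> minimax_interval M (T'' i) (T'' (Suc i))"
  proof (intro allI impI)
    fix i assume i: "i < n + m"
    show "T'' i \<subseteq> T'' (Suc i) \<and> minimax_interval M (T'' i) (T'' (Suc i))"
    proof (cases "i < n")
      case True
      then show ?thesis
        using T(4) low[of i] low[of "Suc i"] by simp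
    next
      case False
      then obtain j where "i = n + j" "j < m"
        using i le_Suc_ex not_less by (metis add_less_cancel_left)
      then show ?thesis
        using T'(4) shift[of j] shift[of "Suc j"] by simp
    qed
  qed
  moreover have "T'' 0 = B" "T'' (n + m) = D"
    using T(1) T'(2) shift[of m] unfolding T''_def by auto
  ultimately show ?thesis
    unfolding minimax_series_def by (intro exI[of _ "n + m"] exI[of _ T'']) simp
qed

lemma minimax_series_map:
  assumes "minimax_series M B C" and "mono \<Phi>"
    and subgroup: "\<And>T. subgroup T M \<Longrightarrow> subgroup (\<Phi> T) M"
    and interval: "\<And>L U. subgroup L M \<Longrightarrow> subgroup U M \<Longrightarrow> L \<subseteq> U \<Longrightarrow>
      minimax_interval M L U \<Longrightarrow> minimax_interval M (\<Phi> L) (\<Phi> U)"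
  shows "minimax_series M (\<Phi> B) (\<Phi> C)"
proof -
  obtain n T where T: "T 0 = B" "T n = C" "\<forall>i\<le>n. subgroup (T i) M"
      "\<forall>i<n. T i \<subseteq> T (Suc i) \<and> minimax_interval M (T i) (T (Suc i))"
    using assms(1) unfolding minimax_series_def by blast
  have "\<forall>i<n. \<Phi> (T i) \<subseteq> \<Phi> (T (Suc i)) \<and> minimax_interval M (\<Phi> (T i)) (\<Phi> (T (Suc i)))"
    using T(3,4) interval monoD[OF \<open>mono \<Phi>\<close>] by simp
  moreover have "\<forall>i\<le>n. subgroup (\<Phi> (T i)) M"
    using T(3) subgroup by simp
  ultimately show ?thesis
    unfolding minimax_series_def using T(1,2)
    by (intro exI[of _ n] exI[of _ "\<lambda>i. \<Phi> (T i)"]) simp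
qed

lemma (in group_hom) minimax_interval_image:
  assumes "subgroup U G" and "L \<subseteq> U" and "minimax_interval G L U"
  shows "minimax_interval H (h ` L) (h ` U)"
proof (rule minimax_interval_transfer[where e = "\<lambda>W. {x \<in> carrier G. h x \<in> W} \<inter> U" and r = "image h"])
  fix W assume W: "subgroup W H" "h ` L \<subseteq> W" "W \<subseteq> h ` U"
  have "U \<subseteq> carrier G"
    using subgroup.subset[OF assms(1)] .
  with W assms(2) show "subgroup ({x \<in> carrier G. h x \<in> W} \<inter> U) G \<and> L \<subseteq> {x \<in> carrier G. h x \<in> W} \<inter> U
      \<and> {x \<in> carrier G. h x \<in> W} \<inter> U \<subseteq> U \<and> h ` ({x \<in> carrier G. h x \<in> W} \<inter> U) = W"
    using subgroup_Int[OF subgroup_vimage[OF W(1)] assms(1)] by blast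
qed (auto intro: monoI simp: assms(3))

lemma (in group) minimax_interval_set_mult:
  assumes "subgroup B G" and "subgroup L G" and "subgroup U G" and "L \<subseteq> U"
    and "minimax_interval G L U"
  shows "minimax_interval G (B <#> L) (B <#> U)"
proof (rule minimax_interval_transfer[where e = "\<lambda>W. U \<inter> W" and r = "\<lambda>Y. B <#> Y"])
  fix W assume W: "subgroup W G" "B <#> L \<subseteq> W" "W \<subseteq> B <#> U"
  have "L \<subseteq> U \<inter> W"
    using subset_set_mult_one(2)[OF subgroup.subset[OF assms(2)] subgroup.one_closed[OF assms(1)]]
      W(2) assms(4) by blast
  moreover have "B <#> (U \<inter> W) = W"
  proof -
    have "B \<subseteq> W"
      using subset_set_mult_one(1)[OF subgroup.subset[OF assms(1)] subgroup.one_closed[OF assms(2)]]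
        W(2) by blast
    then have "B <#> (U \<inter> W) = (B <#> U) \<inter> W"
      using set_mult_Int_subgroup[OF W(1) _ subgroup.subset[OF assms(3)]] by simp
    then show ?thesis
      using W(3) by blast
  qed
  ultimately show "subgroup (U \<inter> W) G \<and> L \<subseteq> U \<inter> W \<and> U \<inter> W \<subseteq> U \<and> B <#> (U \<inter> W) = W"
    using subgroup_Int[OF assms(3) W(1)] by blast
qed (auto intro: monoI simp: assms(5))

lemma (in comm_group) minimax_interval_Int:
  assumes "subgroup B G" and "subgroup L G" and "subgroup U G" and "L \<subseteq> U"
    and "minimax_interval G L U"
  shows "minimax_interval G (B \<inter> L) (B \<inter> U)"
proof (rule minimax_interval_transfer[where e = "\<lambda>W. W <#> L" and r = "\<lambda>Y. B \<inter> Y"])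
  fix W assume W: "subgroup W G" "B \<inter> L \<subseteq> W" "W \<subseteq> B \<inter> U"
  have "L \<subseteq> W <#> L"
    using subset_set_mult_one(2)[OF subgroup.subset[OF assms(2)] subgroup.one_closed[OF W(1)]] .
  moreover have "W <#> L \<subseteq> U"
    using mono_set_mult[of W U L U G] W(3) assms(4) subgroup_mult_id[OF assms(3)] by blast
  moreover have "B \<inter> (W <#> L) = W"
  proof -
    have "B \<inter> (W <#> L) = W <#> (L \<inter> B)"
      using set_mult_Int_subgroup[OF assms(1) _ subgroup.subset[OF assms(2)]] W(3) by blast
    also have "\<dots> = W"
      using subgroup_set_mult_absorb(1)[OF W(1)] W(2) assms(1,2) by (simp add: Int_commute subgroup.one_closed)
    finally show ?thesis .
  qed
  ultimately show "subgroup (W <#> L) G \<and> L \<subseteq> W <#> L \<and> W <#> L \<subseteq> U \<and> B \<inter> (W <#> L) = W"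
    using mult_subgroups[OF W(1) assms(2)] by blast
qed (simp_all add: assms(5) mono_def mono_set_mult)

lemma (in comm_group) minimax_Mod_endomorphism:
  assumes hom: "\<phi> \<in> hom G G" and surj: "\<phi> ` carrier G = carrier G"
    and B: "subgroup B G" and B': "subgroup B' G" and "\<phi> ` B \<subseteq> B'"
    and "minimax (G Mod B)"
  shows "minimax (G Mod B')"
proof -
  interpret \<phi>: group_hom G G \<phi>
    using hom by (simp add: group_hom_def group_hom_axioms_def is_group)
  let ?\<Phi> = "\<lambda>T. B' <#> \<phi> ` T"
  have "minimax_series G (?\<Phi> B) (?\<Phi> (carrier G))"
  proof (rule minimax_series_map[where \<Phi> = ?\<Phi>])
    show "minimax_series G B (carrier G)"
      using \<open>minimax (G Mod B)\<close> minimax_Mod_iff_minimax_series[OF B] by simp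
    show "mono ?\<Phi>"
      by (simp add: mono_def image_mono mono_set_mult)
    show "subgroup (?\<Phi> T) G" if "subgroup T G" for T
      using mult_subgroups[OF B' \<phi>.subgroup_img_is_subgroup[OF that]] .
    show "minimax_interval G (?\<Phi> L) (?\<Phi> U)"
      if "subgroup L G" "subgroup U G" "L \<subseteq> U" "minimax_interval G L U" for L U
      using minimax_interval_set_mult[OF B' \<phi>.subgroup_img_is_subgroup[OF that(1)]
          \<phi>.subgroup_img_is_subgroup[OF that(2)] image_mono[OF that(3)]
          \<phi>.minimax_interval_image[OF that(2,3,4)]] .
  qed
  moreover have "?\<Phi> B = B'"
    using subgroup_set_mult_absorb(1)[OF B' \<open>\<phi> ` B \<subseteq> B'\<close>] subgroup.one_closed[OF B] by force
  moreover have "?\<Phi> (carrier G) = carrier G"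
    using subgroup_set_mult_absorb(2)[OF subgroup_self subgroup.subset[OF B'] subgroup.one_closed[OF B']]
    by (simp add: surj)
  ultimately show ?thesis
    using minimax_Mod_iff_minimax_series[OF B'] by simp
qed

lemma (in comm_group) minimax_Mod_Int:
  assumes B\<^sub>1: "subgroup B\<^sub>1 G" and B\<^sub>2: "subgroup B\<^sub>2 G"
    and "minimax (G Mod B\<^sub>1)" and "minimax (G Mod B\<^sub>2)"
  shows "minimax (G Mod (B\<^sub>1 \<inter> B\<^sub>2))"
proof -
  have "minimax_series G (B\<^sub>1 \<inter> B\<^sub>2) (B\<^sub>1 \<inter> carrier G)"
  proof (rule minimax_series_map[where \<Phi> = "\<lambda>T. B\<^sub>1 \<inter> T"])
    show "minimax_series G B\<^sub>2 (carrier G)"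
      using \<open>minimax (G Mod B\<^sub>2)\<close> minimax_Mod_iff_minimax_series[OF B\<^sub>2] by simp
  qed (auto intro: monoI subgroup_Int[OF B\<^sub>1] minimax_interval_Int[OF B\<^sub>1])
  then have "minimax_series G (B\<^sub>1 \<inter> B\<^sub>2) B\<^sub>1"
    using subgroup.subset[OF B\<^sub>1] by (simp add: Int_absorb2)
  moreover have "minimax_series G B\<^sub>1 (carrier G)"
    using \<open>minimax (G Mod B\<^sub>1)\<close> minimax_Mod_iff_minimax_series[OF B\<^sub>1] by simp
  ultimately show ?thesis
    using minimax_series_trans minimax_Mod_iff_minimax_series[OF subgroup_Int[OF B\<^sub>1 B\<^sub>2]] by blast
qed

lemma (in comm_group) minimax_Mod_mono:
  assumes "subgroup B G" and "subgroup B' G" and "B \<subseteq> B'" and "minimax (G Mod B)"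
  shows "minimax (G Mod B')"
  using minimax_Mod_endomorphism[of id] assms by (simp add: hom_def)

section \<open>The minimax cocentralizer\<close>

lemma ZG_module_act_hom:
  assumes "ZG_module G A act" and "g \<in> carrier G"
  shows "act g \<in> hom A A"
  using assms unfolding ZG_module_def hom_def by auto

lemma ZG_module_act_inv:
  assumes "ZG_module G A act" and "g \<in> carrier G" and "a \<in> carrier A"
  shows "act (inv\<^bsub>G\<^esub> g) (act g a) = a"
proof -
  interpret G: group G
    using assms(1) unfolding ZG_module_def by blast
  have "act (inv\<^bsub>G\<^esub> g) (act g a) = act (inv\<^bsub>G\<^esub> g \<otimes>\<^bsub>G\<^esub> g) a"
    using assms G.inv_closed[OF assms(2)] unfolding ZG_module_def by metis
  then show ?thesis
    using assms unfolding ZG_module_def by simp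
qed

lemma ZG_module_act_surj:
  assumes "ZG_module G A act" and "g \<in> carrier G"
  shows "act g ` carrier A = carrier A"
proof -
  interpret G: group G
    using assms(1) unfolding ZG_module_def by blast
  have "a = act g (act (inv\<^bsub>G\<^esub> g) a)" "act (inv\<^bsub>G\<^esub> g) a \<in> carrier A" if "a \<in> carrier A" for a
    using ZG_module_act_inv[OF assms(1) G.inv_closed[OF assms(2)] that] assms that
    unfolding ZG_module_def by auto
  then show ?thesis
    using assms unfolding ZG_module_def by blast
qed

lemma subgroup_centralizer_in_module:
  assumes "ZG_module G A act" and "H \<subseteq> carrier G"
  shows "subgroup (centralizer_in_module A act H) A"
proof -
  interpret A: comm_group A
    using assms(1) unfolding ZG_module_def by blast
  have hom: "group_hom A A (act h)" if "h \<in> H" for h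
    using ZG_module_act_hom[OF assms(1)] assms(2) that A.is_group
    by (auto simp: group_hom_def group_hom_axioms_def)
  show ?thesis
    unfolding centralizer_in_module_def
    by (rule A.subgroupI)
      (auto simp: group_hom.hom_one[OF hom] group_hom.hom_inv[OF hom] group_hom.hom_mult[OF hom])
qed

lemma Coc_mmx_normal:
  assumes M: "ZG_module G A act"
  shows "Coc_mmx G A act \<lhd> G"
proof -
  interpret G: group G
    using M unfolding ZG_module_def by blast
  interpret A: comm_group A
    using M unfolding ZG_module_def by blast
  let ?C = "\<lambda>x. centralizer_in_module A act {x}"
  have C: "subgroup (?C x) A" if "x \<in> carrier G" for x
    using subgroup_centralizer_in_module[OF M] that by simp
  have Coc: "x \<in> Coc_mmx G A act \<longleftrightarrow> x \<in> carrier G \<and> minimax (A Mod ?C x)" for x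
    unfolding Coc_mmx_def by simp
  have act_mult: "act (x \<otimes>\<^bsub>G\<^esub> y) a = act x (act y a)"
    if "x \<in> carrier G" "y \<in> carrier G" "a \<in> carrier A" for x y a
    using M that unfolding ZG_module_def by blast
  have act_closed: "act x a \<in> carrier A" if "x \<in> carrier G" "a \<in> carrier A" for x a
    using M that unfolding ZG_module_def by blast
  have "subgroup (Coc_mmx G A act) G"
  proof (rule G.subgroupI)
    show "Coc_mmx G A act \<subseteq> carrier G"
      unfolding Coc_mmx_def by blast
    have "?C \<one>\<^bsub>G\<^esub> = carrier A"
      using M unfolding centralizer_in_module_def ZG_module_def by auto
    moreover have "minimax_series A (carrier A) (carrier A)"
      unfolding minimax_series_def
      by (intro exI[of _ 0] exI[of _ "\<lambda>_. carrier A"]) (simp add: A.subgroup_self)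
    ultimately have "\<one>\<^bsub>G\<^esub> \<in> Coc_mmx G A act"
      using Coc A.minimax_Mod_iff_minimax_series[OF A.subgroup_self] by simp
    then show "Coc_mmx G A act \<noteq> {}"
      by blast
  next
    fix x assume "x \<in> Coc_mmx G A act"
    then have x: "x \<in> carrier G" "minimax (A Mod ?C x)"
      using Coc by auto
    have "?C x \<subseteq> ?C (inv\<^bsub>G\<^esub> x)"
      using ZG_module_act_inv[OF M x(1)] unfolding centralizer_in_module_def by force
    then show "inv\<^bsub>G\<^esub> x \<in> Coc_mmx G A act"
      using A.minimax_Mod_mono[OF C[OF x(1)] C[OF G.inv_closed[OF x(1)]] _ x(2)] Coc x(1) by simp
  next
    fix x y assume "x \<in> Coc_mmx G A act" "y \<in> Coc_mmx G A act"
    then have x: "x \<in> carrier G" "minimax (A Mod ?C x)" and y: "y \<in> carrier G" "minimax (A Mod ?C y)"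
      using Coc by auto
    have "?C x \<inter> ?C y \<subseteq> ?C (x \<otimes>\<^bsub>G\<^esub> y)"
      using act_mult x(1) y(1) unfolding centralizer_in_module_def by auto
    then show "x \<otimes>\<^bsub>G\<^esub> y \<in> Coc_mmx G A act"
      using A.minimax_Mod_mono[OF subgroup_Int[OF C[OF x(1)] C[OF y(1)]] C[OF G.m_closed[OF x(1) y(1)]] _
          A.minimax_Mod_Int[OF C[OF x(1)] C[OF y(1)] x(2) y(2)]] Coc x(1) y(1)
      by simp
  qed
  moreover have "h \<otimes>\<^bsub>G\<^esub> x \<otimes>\<^bsub>G\<^esub> inv\<^bsub>G\<^esub> h \<in> Coc_mmx G A act"
    if h: "h \<in> carrier G" and "x \<in> Coc_mmx G A act" for h x
  proof -
    have x: "x \<in> carrier G" "minimax (A Mod ?C x)"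
      using Coc that(2) by auto
    let ?y = "h \<otimes>\<^bsub>G\<^esub> x \<otimes>\<^bsub>G\<^esub> inv\<^bsub>G\<^esub> h"
    have y: "?y \<in> carrier G"
      using h x(1) by simp
    have "act ?y (act h a) = act h a" if "a \<in> carrier A" "act x a = a" for a
      using that h x(1) act_mult act_closed ZG_module_act_inv[OF M h that(1)] by simp
    then have "act h ` ?C x \<subseteq> ?C ?y"
      using act_closed[OF h] unfolding centralizer_in_module_def by auto
    then show "?y \<in> Coc_mmx G A act"
      using A.minimax_Mod_endomorphism[OF ZG_module_act_hom[OF M h] ZG_module_act_surj[OF M h]
          C[OF x(1)] C[OF y] _ x(2)] Coc y by simp
  qed
  ultimately show ?thesis
    using G.normal_invI by blast
qed

section \<open>Groups cyclic over an absorbing normal subgroup\<close>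

lemma prime_power_if_prime_divisors_eq:
  fixes n p :: nat
  assumes "n \<noteq> 0" and "\<And>q. Factorial_Ring.prime q \<Longrightarrow> q dvd n \<Longrightarrow> q = p"
  shows "n = p ^ multiplicity p n"
proof -
  have "prime_factors n \<subseteq> {p}"
    using assms(2) by (auto simp only: in_prime_factors_iff)
  then consider "prime_factors n = {p}" | "prime_factors n = {}"
    by blast
  then show ?thesis
  proof cases
    case 1
    then show ?thesis
      using prod_prime_factors[OF assms(1)] by simp
  next
    case 2
    then have "n = 1"
      using assms(1) by (simp add: prime_factorization_empty_iff)
    then show ?thesis
      by simp
  qed
qed

context group
begin

lemma finite_rcosets_mono:
  assumes H: "subgroup H G" and K: "subgroup K G" and "H \<subseteq> K" and "finite (rcosets H)"
  shows "finite (rcosets K)"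
proof -
  have "K #> a = K <#> (H #> a)" if "a \<in> carrier G" for a
    using that subgroup_set_mult_absorb(1)[OF K \<open>H \<subseteq> K\<close> subgroup.one_closed[OF H]]
      setmult_rcos_assoc[OF subgroup.subset[OF K] subgroup.subset[OF H]] by simp
  then have "rcosets K = (\<lambda>S. K <#> S) ` (rcosets H)"
    unfolding RCOSETS_def by (auto simp: image_UN)
  then show ?thesis
    using \<open>finite (rcosets H)\<close> by simp
qed

lemma fin_gen_group_if_finite_index:
  assumes K: "fin_gen_subgroup G K" and "finite (rcosets K)"
  shows "fin_gen_group G"
proof -
  obtain S where S: "finite S" "S \<subseteq> K" "generate G S = K"
    using K unfolding fin_gen_subgroup_def by blast
  have Ksub: "subgroup K G"
    using K unfolding fin_gen_subgroup_def by blast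
  have "rcosets K \<subseteq> (\<lambda>a. K #> a) ` carrier G"
    unfolding RCOSETS_def by blast
  from finite_subset_image[OF \<open>finite (rcosets K)\<close> this]
  obtain R where R: "R \<subseteq> carrier G" "finite R" "rcosets K = (\<lambda>a. K #> a) ` R"
    by blast
  have SR: "S \<union> R \<subseteq> carrier G"
    using S(2) R(1) subgroup.subset[OF Ksub] by blast
  have "carrier G \<subseteq> generate G (S \<union> R)"
  proof
    fix y assume y: "y \<in> carrier G"
    then have "K #> y \<in> (\<lambda>a. K #> a) ` R"
      using rcosetsI[OF subgroup.subset[OF Ksub]] R(3) by blast
    then obtain r where r: "r \<in> R" "K #> y = K #> r"
      by blast
    then have "y \<in> K #> r"
      using rcos_self[OF y Ksub] by simp
    then obtain k where k: "k \<in> K" "y = k \<otimes> r"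
      unfolding r_coset_def by blast
    have "k \<in> generate G (S \<union> R)"
      using k(1) S(3) mono_generate[of S "S \<union> R"] by blast
    moreover have "r \<in> generate G (S \<union> R)"
      using r(1) by (blast intro: generate.incl)
    ultimately show "y \<in> generate G (S \<union> R)"
      unfolding k(2) by (rule generate.eng)
  qed
  then have "generate G (S \<union> R) = carrier G"
    using generate_incl[OF SR] by blast
  then show ?thesis
    unfolding fin_gen_group_def using S(1) R(2) SR by blast
qed

lemma ord_dvd_ord_if_mem_generate:
  assumes "z \<in> carrier G" and "y \<in> generate G {z}"
  shows "ord y dvd ord z"
proof -
  obtain k :: int where k: "y = z [^] k"
    using assms generate_pow by blast
  have "y [^] int (ord z) = (z [^] int (ord z)) [^] k"
    using assms(1) by (simp add: k int_pow_pow mult.commute)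
  also have "\<dots> = \<one>"
    using assms(1) by (simp add: int_pow_int)
  finally show ?thesis
    using int_pow_eq_id[of y "int (ord z)"] assms(1) k by simp
qed

lemma mem_rcoset_pow_if_set_mult_generate:
  assumes N: "subgroup N G" and g: "g \<in> carrier G" and gen: "carrier G = N <#> generate G {g}"
    and y: "y \<in> carrier G"
  obtains k :: int where "y \<in> N #> g [^] k"
proof -
  obtain c z where "c \<in> N" "z \<in> generate G {g}" "y = c \<otimes> z"
    using y gen unfolding set_mult_def by blast
  moreover obtain k :: int where "z = g [^] k"
    using \<open>z \<in> generate G {g}\<close> generate_pow[OF g] by blast
  ultimately have "y \<in> N #> g [^] k"
    using rcosI[OF _ subgroup.subset[OF N]] g by simp
  then show thesis
    by (rule that)
qed

lemma finite_rcosets_set_mult_generate_pow: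
  assumes N: "N \<lhd> G" and g: "g \<in> carrier G" and gen: "carrier G = N <#> generate G {g}"
    and n: "0 < (n::int)"
  shows "finite (rcosets (N <#> generate G {g [^] n}))"
proof -
  let ?K = "N <#> generate G {g [^] n}"
  have K: "subgroup ?K G"
    using mult_norm_subgroup[OF N generate_is_subgroup[of "{g [^] n}"]] g by simp
  have N_sub: "subgroup N G"
    using N by (rule normal_imp_subgroup)
  have "?K #> y \<in> (\<lambda>r. ?K #> g [^] r) ` {0..<n}" if y: "y \<in> carrier G" for y
  proof -
    obtain k :: int where "y \<in> N #> g [^] k"
      using mem_rcoset_pow_if_set_mult_generate[OF N_sub g gen y] .
    then obtain c where c: "c \<in> N" "y = c \<otimes> g [^] k"
      unfolding r_coset_def by blast
    have c_carrier: "c \<in> carrier G"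
      using subgroup.mem_carrier[OF N_sub c(1)] .
    have "g [^] k = g [^] (n * (k div n)) \<otimes> g [^] (k mod n)"
      using int_pow_mult[OF g, of "n * (k div n)" "k mod n"] by simp
    then have "y = (c \<otimes> g [^] (n * (k div n))) \<otimes> g [^] (k mod n)"
      using c(2) c_carrier g by (simp add: m_assoc)
    moreover have "c \<otimes> g [^] (n * (k div n)) \<in> ?K"
    proof -
      have "(g [^] n) [^] (k div n) \<in> generate G {g [^] n}"
        using subgroup_int_pow_closed[OF generate_is_subgroup generate.incl] g by simp
      then show ?thesis
        using c(1) int_pow_pow[OF g] unfolding set_mult_def by auto
    qed
    ultimately have "y \<in> ?K #> g [^] (k mod n)"
      using rcosI[OF _ subgroup.subset[OF K]] g by simp
    then have "?K #> y = ?K #> g [^] (k mod n)"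
      using repr_independence[OF _ _ K] g by simp
    moreover have "k mod n \<in> {0..<n}"
      using n by simp
    ultimately show ?thesis
      by blast
  qed
  then have "rcosets ?K \<subseteq> (\<lambda>r. ?K #> g [^] r) ` {0..<n}"
    unfolding RCOSETS_def by auto
  then show ?thesis
    by (rule finite_surj[OF finite_atLeastLessThan_int])
qed

lemma pow_mem_if_mem_set_mult_generate_pow:
  assumes N: "subgroup N G" and g: "g \<in> carrier G" and "g \<in> N <#> generate G {g [^] (n::int)}"
  obtains j :: int where "g [^] (1 - n * j) \<in> N"
proof -
  obtain c z where cz: "c \<in> N" "z \<in> generate G {g [^] n}" "g = c \<otimes> z"
    using assms(3) unfolding set_mult_def by blast
  obtain j :: int where z: "z = g [^] (n * j)"
    using cz(2) generate_pow[of "g [^] n"] g int_pow_pow[OF g] by auto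
  have "z \<in> carrier G"
    using z g by simp
  then have "c = g \<otimes> inv z"
    unfolding cz(3) using subgroup.mem_carrier[OF N cz(1)] by (simp add: m_assoc)
  then have "c = g [^] (1::int) \<otimes> inv (g [^] (n * j))"
    using g z by simp
  then have "g [^] (1 - n * j) \<in> N"
    using cz(1) g by (simp add: int_pow_diff)
  then show thesis
    by (rule that)
qed

end

lemma (in normal) pow_mem_iff_ord_FactGroup_dvd:
  assumes "a \<in> carrier G"
  shows "a [^] k \<in> H \<longleftrightarrow> int (group.ord (G Mod H) (H #> a)) dvd k"
proof -
  have aH: "H #> a \<in> carrier (G Mod H)"
    using assms by (auto simp: FactGroup_def RCOSETS_def)
  have "int (group.ord (G Mod H) (H #> a)) dvd k \<longleftrightarrow> H #> (a [^] k) = H"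
    using group.int_pow_eq_id[OF factorgroup_is_group aH, of k] FactGroup_int_pow[OF assms, of k]
    by simp
  also have "\<dots> \<longleftrightarrow> a [^] k \<in> H"
    using coset_join2[OF _ subgroup_axioms] rcos_self[OF _ subgroup_axioms] assms by auto
  finally show ?thesis
    by simp
qed

lemma (in normal) FactGroup_generated_by_rcoset:
  assumes g: "g \<in> carrier G" and gen: "carrier G = H <#> generate G {g}"
  shows "carrier (G Mod H) = generate (G Mod H) {H #> g}"
proof
  interpret Q: group "G Mod H"
    by (rule factorgroup_is_group)
  have gQ: "H #> g \<in> carrier (G Mod H)"
    using g by (auto simp: FactGroup_def RCOSETS_def)
  show "generate (G Mod H) {H #> g} \<subseteq> carrier (G Mod H)"
    using Q.generate_incl gQ by simp
  show "carrier (G Mod H) \<subseteq> generate (G Mod H) {H #> g}"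
  proof
    fix Y assume "Y \<in> carrier (G Mod H)"
    then obtain y where y: "y \<in> carrier G" "Y = H #> y"
      by (auto simp: FactGroup_def RCOSETS_def)
    obtain k :: int where "y \<in> H #> g [^] k"
      using mem_rcoset_pow_if_set_mult_generate[OF subgroup_axioms g gen y(1)] .
    then have "Y = (H #> g) [^]\<^bsub>G Mod H\<^esub> k"
      using repr_independence[OF _ _ subgroup_axioms] y(2) g FactGroup_int_pow[OF g] by simp
    then show "Y \<in> generate (G Mod H) {H #> g}"
      using Q.generate_pow[OF gQ] by blast
  qed
qed

locale absorbing_cocyclic = group G for G (structure) +
  fixes C :: "'a set" and g :: 'a
  assumes C_normal: "C \<lhd> G"
    and C_proper: "C \<noteq> carrier G"
    and g_carrier: "g \<in> carrier G"
    and generated: "carrier G = generate G {g} <#> C"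
    and absorbing: "\<And>K. subgroup K G \<Longrightarrow> K \<noteq> carrier G \<Longrightarrow> finite (rcosets K) \<Longrightarrow> K \<subseteq> C"
begin

lemma C_subgroup: "subgroup C G"
  using C_normal by (rule normal_imp_subgroup)

lemma generate_g_subgroup: "subgroup (generate G {g}) G"
  using g_carrier by (simp add: generate_is_subgroup)

lemma C_set_mult_generate: "carrier G = C <#> generate G {g}"
  using generated commut_normal[OF generate_g_subgroup C_normal] by simp

lemma g_notin_C: "g \<notin> C"
proof
  assume "g \<in> C"
  then have "generate G {g} \<subseteq> C"
    using generate_subgroup_incl[OF _ C_subgroup] by simp
  then have "carrier G \<subseteq> C <#> C"
    using generated mono_set_mult by blast
  then show False
    using C_proper subgroup_mult_id[OF C_subgroup] subgroup.subset[OF C_subgroup] by auto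
qed

text \<open>\<open>N\<langle>g\<^sup>q\<rangle>\<close> has finite index, and it is proper: otherwise \<open>g \<equiv> g\<^sup>q\<^sup>j\<close> mod \<open>N\<close>, so \<open>q\<close> would divide \<open>1 - q j\<close>.\<close>
lemma pow_prime_mem_C:
  assumes N: "N \<lhd> G" and gen: "carrier G = N <#> generate G {g}"
    and q: "Factorial_Ring.prime q" and dvd: "q dvd group.ord (G Mod N) (N #> g)"
  shows "g [^] int q \<in> C"
proof -
  interpret N: normal N G by fact
  let ?K = "N <#> generate G {g [^] int q}"
  have K: "subgroup ?K G"
    using mult_norm_subgroup[OF N generate_is_subgroup[of "{g [^] int q}"]] g_carrier by simp
  have "?K \<noteq> carrier G"
  proof
    assume "?K = carrier G"
    then obtain j :: int where "g [^] (1 - int q * j) \<in> N"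
      using pow_mem_if_mem_set_mult_generate_pow[OF N.subgroup_axioms g_carrier] g_carrier by blast
    then have "int q dvd 1 - int q * j"
      using N.pow_mem_iff_ord_FactGroup_dvd[OF g_carrier] dvd by (meson dvd_trans int_dvd_int_iff)
    then have "int q dvd 1"
      by (metis dvd_add_left_iff dvd_triv_left diff_add_cancel)
    then show False
      using q by simp
  qed
  then have "?K \<subseteq> C"
    using absorbing[OF K] finite_rcosets_set_mult_generate_pow[OF N g_carrier gen] q
    by (simp add: prime_gt_0_nat)
  moreover have "g [^] int q \<in> ?K"
    using subset_set_mult_one(2)[of "generate G {g [^] int q}" N] generate.incl[of "g [^] int q"]
      generate_incl[of "{g [^] int q}"] g_carrier N.one_closed by auto
  ultimately show ?thesis
    by blast
qed

lemma card_rcosets_eq_ord: "card (rcosets C) = group.ord (G Mod C) (C #> g)"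
proof -
  interpret C: normal C G by (rule C_normal)
  interpret Q: group "G Mod C" by (rule C.factorgroup_is_group)
  have "card (rcosets C) = card (generate (G Mod C) {C #> g})"
    using C.FactGroup_generated_by_rcoset[OF g_carrier C_set_mult_generate] by (simp add: FactGroup_def)
  also have "\<dots> = group.ord (G Mod C) (C #> g)"
    using Q.generate_pow_card[of "C #> g"] g_carrier by (fastforce simp: FactGroup_def RCOSETS_def)
  finally show ?thesis .
qed

lemma prime_card_rcosets: "Factorial_Ring.prime (card (rcosets C))"
proof -
  interpret C: normal C G by (rule C_normal)
  let ?p = "group.ord (G Mod C) (C #> g)"
  have "?p \<noteq> 1"
    using C.pow_mem_iff_ord_FactGroup_dvd[OF g_carrier, of 1] g_notin_C g_carrier by auto
  moreover have "q = ?p" if "Factorial_Ring.prime q" "q dvd ?p" for q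
  proof -
    have "?p dvd q"
      using pow_prime_mem_C[OF C_normal C_set_mult_generate that] C.pow_mem_iff_ord_FactGroup_dvd[OF g_carrier]
      by simp
    then show ?thesis
      using that(1) \<open>?p \<noteq> 1\<close> by (auto simp: prime_nat_iff)
  qed
  ultimately show ?thesis
    using prime_factor_nat card_rcosets_eq_ord by metis
qed

lemma set_mult_generate_eq:
  assumes H: "H \<lhd> G" and "finite (rcosets H)"
  shows "H <#> generate G {g} = carrier G"
proof (rule ccontr)
  assume ne: "H <#> generate G {g} \<noteq> carrier G"
  have K: "subgroup (H <#> generate G {g}) G"
    using mult_norm_subgroup[OF H generate_g_subgroup] .
  have "H \<subseteq> H <#> generate G {g}"
    using subset_set_mult_one(1)[OF subgroup.subset[OF normal_imp_subgroup[OF H]]] generate.one by blast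
  then have "finite (rcosets (H <#> generate G {g}))"
    using finite_rcosets_mono[OF normal_imp_subgroup[OF H] K] assms(2) by blast
  then have "H <#> generate G {g} \<subseteq> C"
    using absorbing[OF K ne] by blast
  moreover have "g \<in> H <#> generate G {g}"
    using subset_set_mult_one(2)[of "generate G {g}" H] generate.incl[of g] generate_incl[of "{g}"]
      g_carrier subgroup.one_closed[OF normal_imp_subgroup[OF H]] by auto
  ultimately show False
    using g_notin_C by blast
qed

lemma FactGroup_ord_eq_prime_power:
  assumes H: "H \<lhd> G" and fin: "finite (rcosets H)" and Y: "Y \<in> carrier (G Mod H)"
  shows "\<exists>k. group.ord (G Mod H) Y = card (rcosets C) ^ k"
proof -
  interpret H: normal H G by fact
  interpret Q: group "G Mod H" by (rule H.factorgroup_is_group)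
  let ?p = "card (rcosets C)" and ?z = "H #> g"
  have gen: "carrier G = H <#> generate G {g}"
    using set_mult_generate_eq[OF H fin] by simp
  have z: "?z \<in> carrier (G Mod H)"
    using g_carrier by (auto simp: FactGroup_def RCOSETS_def)
  have "Q.ord ?z \<noteq> 0"
    using Q.ord_ge_1[OF _ z] fin by (simp add: FactGroup_def)
  moreover have "q = ?p" if "Factorial_Ring.prime q" "q dvd Q.ord ?z" for q
  proof -
    interpret C: normal C G by (rule C_normal)
    have "?p dvd q"
      using pow_prime_mem_C[OF H gen that] C.pow_mem_iff_ord_FactGroup_dvd[OF g_carrier]
        card_rcosets_eq_ord by simp
    then show ?thesis
      using that(1) prime_card_rcosets by (auto simp: prime_nat_iff)
  qed
  ultimately have "Q.ord ?z = ?p ^ multiplicity ?p (Q.ord ?z)"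
    by (rule prime_power_if_prime_divisors_eq)
  moreover have "Q.ord Y dvd Q.ord ?z"
    using Q.ord_dvd_ord_if_mem_generate[OF z] Y H.FactGroup_generated_by_rcoset[OF g_carrier gen]
    by simp
  ultimately show ?thesis
    using divides_primepow_nat[OF prime_card_rcosets] by metis
qed

end

section \<open>Application to minimax-antifinitary modules\<close>

lemma finite_index_subgroup_subset_Coc_mmx:
  assumes AF: "minimax_antifinitary G A act" and not_fg: "\<not> fin_gen_group G"
    and K: "subgroup K G" and proper: "K \<noteq> carrier G" and fin: "finite (rcosets\<^bsub>G\<^esub> K)"
  shows "K \<subseteq> Coc_mmx G A act"
proof
  fix x assume x: "x \<in> K"
  have M: "ZG_module G A act"
    using AF unfolding minimax_antifinitary_def by blast
  interpret G: group G
    using M unfolding ZG_module_def by blast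
  interpret A: comm_group A
    using M unfolding ZG_module_def by blast
  have K_carrier: "K \<subseteq> carrier G"
    using subgroup.subset[OF K] .
  have "\<not> fin_gen_subgroup G K"
    using G.fin_gen_group_if_finite_index fin not_fg by blast
  then have "minimax (A Mod centralizer_in_module A act K)"
    using AF K proper unfolding minimax_antifinitary_def by blast
  moreover have "centralizer_in_module A act K \<subseteq> centralizer_in_module A act {x}"
    unfolding centralizer_in_module_def using x by blast
  ultimately have "minimax (A Mod centralizer_in_module A act {x})"
    using A.minimax_Mod_mono[OF subgroup_centralizer_in_module[OF M K_carrier]
        subgroup_centralizer_in_module[OF M]] K_carrier x by blast
  then show "x \<in> Coc_mmx G A act"
    unfolding Coc_mmx_def using x K_carrier by blast
qed

theorem corollary3p3:
  fixes G :: "('g, 'c) monoid_scheme" and A :: "('a, 'd) monoid_scheme"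
    and act :: "'g \<Rightarrow> 'a \<Rightarrow> 'a" and g :: 'g and H :: "'g set"
  assumes "group G"
    and "locally_generalized_radical G"
    and "minimax_antifinitary G A act"
    and "Coc_mmx G A act \<noteq> carrier G"
    and "\<not> fin_gen_group G"
    and "fin_gen_group (G Mod Coc_mmx G A act)"
    and "g \<in> carrier G"
    and "carrier G = generate G {g} <#>\<^bsub>G\<^esub> Coc_mmx G A act"
    and "H \<lhd> G"
    and "finite (rcosets\<^bsub>G\<^esub> H)"
  shows "H <#>\<^bsub>G\<^esub> generate G {g} = carrier G
    \<and> Factorial_Ring.prime (card (rcosets\<^bsub>G\<^esub> Coc_mmx G A act))
    \<and> (\<forall>x\<in>carrier (G Mod H). \<exists>k::nat.
          group.ord (G Mod H) x = card (rcosets\<^bsub>G\<^esub> Coc_mmx G A act) ^ k)"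
proof -
  have "ZG_module G A act"
    using assms(3) unfolding minimax_antifinitary_def by blast
  then interpret absorbing_cocyclic G "Coc_mmx G A act" g
    by (intro absorbing_cocyclic.intro absorbing_cocyclic_axioms.intro assms(1,4,7,8) Coc_mmx_normal
        finite_index_subgroup_subset_Coc_mmx[OF assms(3,5)])
  show ?thesis
    using set_mult_generate_eq[OF assms(9,10)] prime_card_rcosets
      FactGroup_ord_eq_prime_power[OF assms(9,10)] by simp
qed

end
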